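(* Let $I$ be a proper ideal of $\mathbb{C}[\mathrm{GL}_n]$ and $Y = V(I)$. For $P(t),Q(t)\in\mathrm{GL}_n(\mathcal{R})$ let $Y_{P(t),Q(t)} = V(\Psi_{P(t),Q(t)}(I))\subset(\overline{\mathcal{K}}^* )^n$. Then \[\mathrm{strop}(Y) = \overline{\bigcup_{(P(t),Q(t))\in\mathrm{GL}_n(\mathcal{R})\times\mathrm{GL}_n(\mathcal{R})}\mathrm{trop}(Y_{P(t),Q(t)})}.\]
   Context: $\mathbb{C}[\mathrm{GL}_n]$ is the ring of regular functions on $\mathrm{GL}_n(\mathbb{C})$. $\overline{\mathcal{K}}$ is the field of complex Puiseux series with valuation $\mathrm{val}(\sum a_qt^q) = \min\{q:a_q\ne0\}$; $\mathcal{R} = \{z:\mathrm{val}(z)\ge0\}$. For $f\in\mathbb{C}[\mathrm{GL}_n]$ and $P(t),Q(t)\in\mathrm{GL}_n(\mathcal{R})$, $\Psi_{P(t),Q(t)}(f)$ is the Laurent polynomial over $\overline{\mathcal{K}}$ given by $z(t)\mapsto f(P(t)\,\mathrm{diag}(z(t))\,Q(t)^{-1})$, and $\Psi_{P,Q}(I) = \{\Psi_{P,Q}(f):f\in I\}$; $V(\cdot)\subset(\overline{\mathcal{K}}^* )^n$ is the common zero set. For $Z\subset(\overline{\mathcal{K}}^* )^n$, $\mathrm{trop}(Z)$ is the closure in $\mathbb{R}^n$ of $\{(\mathrm{val}(z_1),\dots,\mathrm{val}(z_n)) : z\in Z\}$. Every $A(t)\in\mathrm{GL}_n(\overline{\mathcal{K}})$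 factors as $P(t)\,\mathrm{diag}(z(t))\,Q(t)^{-1}$ with $P,Q\in\mathrm{GL}_n(\mathcal{R})$, the multiset $\{\mathrm{val}(z_i(t))\}$ being independent of the choice; $\mathrm{sval}(A(t))$ is this multiset in $\mathbb{Q}^n/\mathcal{S}_n$. $Y(\overline{\mathcal{K}})$ is the set of $A(t)\in\mathrm{GL}_n(\overline{\mathcal{K}})$ on which all $f\in I$ vanish, and $\mathrm{strop}(Y)$ is the closure in $\mathbb{R}^n$ of the set of $x\in\mathbb{Q}^n$ whose $\mathcal{S}_n$-orbit equals $\mathrm{sval}(A(t))$ for some $A(t)\in Y(\overline{\mathcal{K}})$. *)

theory Defs
  imports "HOL-Analysis.Analysis" "HOL-Computational_Algebra.Formal_Laurent_Series"
          "HOL-Library.Poly_Mapping" "HOL-Library.Multiset"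
begin

no_notation fps_nth (infixl \<open>$\<close> 75)

text \<open>An element of C((t^(1/N))) (level N, N >= 1) is represented by a complex formal
Laurent series f in the variable s = t^(1/N); i.e. f represents sum_k f_k t^(k/N).
The field of Puiseux series is the direct limit (union) of these levels along the
maps lift M : C((t^(1/N))) -> C((t^(1/(N*M)))), s |-> s^M.\<close>

definition lift :: "nat \<Rightarrow> complex fls \<Rightarrow> complex fls" where
  "lift M f = Abs_fls (\<lambda>k. if int M dvd k then fls_nth f (k div int M) else 0)"

definition lift_mat :: "nat \<Rightarrow> complex fls ^'n^'m \<Rightarrow> complex fls ^'n^'m" where
  "lift_mat M A = (\<chi> i j. lift M (A $ i $ j))"

definition val_lvl :: "nat \<Rightarrow> complex fls \<Rightarrow> real" where
  "val_lvl N f = real_of_int (fls_subdegree f) / real N"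

definition in_R :: "complex fls \<Rightarrow> bool" where
  "in_R f \<longleftrightarrow> f = 0 \<or> fls_subdegree f \<ge> 0"

definition GL_R :: "(complex fls ^'n^'n) set" where
  "GL_R = {A. (\<forall>i j. in_R (A $ i $ j)) \<and>
              (\<exists>B. (\<forall>i j. in_R (B $ i $ j)) \<and> A ** B = mat 1 \<and> B ** A = mat 1)}"

definition diagm :: "'a::zero ^'n \<Rightarrow> 'a ^'n^'n" where
  "diagm z = (\<chi> i j. if i = j then z $ i else 0)"

type_synonym 'n mpoly = "(('n \<times> 'n) \<Rightarrow>\<^sub>0 nat) \<Rightarrow>\<^sub>0 complex"

definition peval :: "(complex \<Rightarrow> 'a::comm_ring_1) \<Rightarrow> 'n mpoly \<Rightarrow> 'a^'n^'n \<Rightarrow> 'a" where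
  "peval emb p A = (\<Sum>mo\<in>Poly_Mapping.keys p. emb (Poly_Mapping.lookup p mo) *
      (\<Prod>ij\<in>Poly_Mapping.keys mo. (A $ fst ij $ snd ij) ^ Poly_Mapping.lookup mo ij))"

definition represents :: "(complex^'n^'n \<Rightarrow> complex) \<Rightarrow> 'n mpoly \<Rightarrow> nat \<Rightarrow> bool" where
  "represents f p k \<longleftrightarrow> (\<forall>A. det A \<noteq> 0 \<longrightarrow> f A = peval id p A / det A ^ k)"

text \<open>C[GL_n]: the ring (under pointwise operations) of regular functions on GL_n(C);
normalised to be 0 off GL_n(C).\<close>
definition regfun :: "(complex^'n^'n \<Rightarrow> complex) set" where
  "regfun = {f. (\<exists>p k. represents f p k) \<and> (\<forall>A. det A = 0 \<longrightarrow> f A = 0)}"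

definition is_ideal :: "(complex^'n^'n \<Rightarrow> complex) set \<Rightarrow> bool" where
  "is_ideal I \<longleftrightarrow> I \<subseteq> regfun \<and> (\<lambda>_. 0) \<in> I \<and>
     (\<forall>f\<in>I. \<forall>g\<in>I. (\<lambda>A. f A + g A) \<in> I) \<and>
     (\<forall>f\<in>I. \<forall>g\<in>regfun. (\<lambda>A. g A * f A) \<in> I)"

definition proper_ideal :: "(complex^'n^'n \<Rightarrow> complex) set \<Rightarrow> bool" where
  "proper_ideal I \<longleftrightarrow> is_ideal I \<and> I \<noteq> regfun"

definition regext :: "(complex^'n^'n \<Rightarrow> complex) \<Rightarrow> complex fls^'n^'n \<Rightarrow> complex fls" where
  "regext f A = (let (p, k) = (SOME (p, k). represents f p k)
                 in peval fls_const p A / det A ^ k)"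

text \<open>trop(Y_{P,Q}) for P, Q in GL_n(R) given at level N: closure of the valuation vectors
of points z in (K^*)^n (taken at any finer level N*M) with Psi_{P,Q}(f)(z) = 0 for all f in I.\<close>
definition trop_PQ :: "(complex^'n^'n \<Rightarrow> complex) set \<Rightarrow> nat \<Rightarrow>
     complex fls^'n^'n \<Rightarrow> complex fls^'n^'n \<Rightarrow> (real^'n) set" where
  "trop_PQ I N P Q = closure {x. \<exists>M z. M > 0 \<and> (\<forall>i. z $ i \<noteq> 0) \<and>
      (\<forall>f\<in>I. regext f (lift_mat M P ** diagm z ** matrix_inv (lift_mat M Q)) = 0) \<and>
      (\<forall>i. x $ i = val_lvl (N * M) (z $ i))}"

definition mset_vec :: "'a^'n::finite \<Rightarrow> 'a multiset" where
  "mset_vec x = image_mset (\<lambda>i. x $ i) (mset_set UNIV)"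

text \<open>x (as an S_n-orbit) equals sval(A) for A of level N: there is a factorisation
A = P diag(z) Q^{-1} with P, Q in GL_n(R) (at some finer level N*M) whose valuation
multiset is that of x.\<close>
definition is_sval :: "nat \<Rightarrow> complex fls^'n^'n \<Rightarrow> real^'n \<Rightarrow> bool" where
  "is_sval N A x \<longleftrightarrow> (\<exists>M P Q z. M > 0 \<and> P \<in> GL_R \<and> Q \<in> GL_R \<and> (\<forall>i. z $ i \<noteq> 0) \<and>
      lift_mat M A = P ** diagm z ** matrix_inv Q \<and>
      mset_vec x = image_mset (val_lvl (N * M)) (mset_vec z))"

definition strop :: "(complex^'n^'n \<Rightarrow> complex) set \<Rightarrow> (real^'n) set" where
  "strop I = closure {x. (\<forall>i. x $ i \<in> \<rat>) \<and>
      (\<exists>N A. N > 0 \<and> det A \<noteq> 0 \<and> (\<forall>f\<in>I. regext f A = 0) \<and> is_sval N A x)}"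

end

theory Submission
  imports Defs "HOL-Combinatorics.Permutations"
begin

text \<open>
  A point z of Y_{P,Q} yields the point P diag(z) Q^{-1} of Y, whose singular valuations are
  the valuations of z; conversely, if A = P diag(z) Q^{-1} lies in Y then z lies in Y_{P,Q}.
  Since sval(A) only records a multiset, the coordinates of z must still be put into the order
  of the given x, which is done by replacing P, Q with P \<Pi>, Q \<Pi> for a permutation matrix \<Pi>.
  The passage between the levels C((t^(1/N))) is harmless because lift M is a field
  embedding, hence commutes with determinants, inverses and the evaluation of regular functions.
\<close>

lemma fls_compose_power_eq_0_iff:
  "d > 0 \<Longrightarrow> fls_compose_power f d = 0 \<longleftrightarrow> f = 0"
  by (metis (no_types) fls_compose_power_0_left fls_eqI fls_nth_compose_power fls_zero_nth
      dvd_triv_left nonzero_mult_div_cancel_left of_nat_0_less_iff less_irrefl)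

lemma fls_compose_power_divide:
  "fls_compose_power (f / g :: 'a::field fls) d = fls_compose_power f d / fls_compose_power g d"
proof (cases "d > 0 \<and> g \<noteq> 0")
  case True
  then have "fls_compose_power (f / g) d * fls_compose_power g d = fls_compose_power f d"
    by (simp flip: fls_compose_power_mult)
  with True show ?thesis
    by (simp add: fls_compose_power_eq_0_iff eq_divide_eq)
qed auto

lemma fls_compose_power_sum:
  "fls_compose_power (\<Sum>x\<in>S. f x) d = (\<Sum>x\<in>S. fls_compose_power (f x) d)"
  by (induction S rule: infinite_finite_induct) auto

lemma fls_compose_power_prod:
  "d > 0 \<Longrightarrow> fls_compose_power (\<Prod>x\<in>S. f x :: 'a::idom fls) d = (\<Prod>x\<in>S. fls_compose_power (f x) d)"
  by (induction S rule: infinite_finite_induct) auto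

lemma lift_conv_fls_compose_power: "M > 0 \<Longrightarrow> lift M f = fls_compose_power f M"
proof -
  assume "M > 0"
  then have "fls_nth (fls_compose_power f M) = (\<lambda>k. if int M dvd k then fls_nth f (k div int M) else 0)"
    by (simp add: fls_nth_compose_power fun_eq_iff)
  then show ?thesis
    unfolding lift_def by (metis fls_nth_inverse)
qed

lemma lift_by_1: "lift 1 f = f"
  by (intro fls_eqI) (simp add: lift_conv_fls_compose_power fls_nth_compose_power)

lemma lift_mat_by_1: "lift_mat 1 A = A"
  by (simp add: lift_mat_def lift_by_1 del: One_nat_def)

lemma lift_mat_mult: "M > 0 \<Longrightarrow> lift_mat M (A ** B) = lift_mat M A ** lift_mat M B"
  by (simp add: lift_mat_def matrix_matrix_mult_def lift_conv_fls_compose_power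
      fls_compose_power_sum vec_eq_iff)

lemma lift_mat_mat_1: "M > 0 \<Longrightarrow> lift_mat M (mat 1) = mat 1"
  by (simp add: lift_mat_def mat_def lift_conv_fls_compose_power vec_eq_iff)

lemma det_lift_mat: "M > 0 \<Longrightarrow> det (lift_mat M A) = lift M (det A)"
  by (simp add: det_def lift_mat_def lift_conv_fls_compose_power fls_compose_power_sum
      fls_compose_power_prod fls_of_int)

lemma peval_lift_mat:
  "M > 0 \<Longrightarrow> peval fls_const p (lift_mat M A) = lift M (peval fls_const p A)"
  by (simp add: peval_def lift_mat_def lift_conv_fls_compose_power fls_compose_power_sum
      fls_compose_power_prod)

lemma regext_lift_mat: "M > 0 \<Longrightarrow> regext f (lift_mat M A) = lift M (regext f A)"
  by (simp add: regext_def case_prod_unfold Let_def peval_lift_mat det_lift_mat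
      lift_conv_fls_compose_power fls_compose_power_divide)

lemma in_R_iff_fps: "in_R f \<longleftrightarrow> f \<in> range fps_to_fls"
  unfolding in_R_def
  by (metis fls_regpart_to_fls_trivial fls_subdegree_fls_to_fps_gt0 fps_to_fls_eq_0_iff
      range_eqI image_iff)

lemma in_R_lift: "M > 0 \<Longrightarrow> in_R f \<Longrightarrow> in_R (lift M f)"
  by (auto simp: in_R_iff_fps lift_conv_fls_compose_power fls_compose_power_fps_to_fls)

lemma matrix_inv_eqI:
  fixes A B :: "'a::semiring_1^'n^'n"
  assumes "A ** B = mat 1" "B ** A = mat 1"
  shows "matrix_inv A = B"
proof -
  have "A ** matrix_inv A = mat 1 \<and> matrix_inv A ** A = mat 1"
    unfolding matrix_inv_def by (rule someI[of _ B]) (use assms in blast)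
  then have "matrix_inv A = matrix_inv A ** (A ** B)"
    using assms by (simp add: matrix_mul_rid)
  also have "\<dots> = B"
    using \<open>_ \<and> _\<close> by (simp add: matrix_mul_assoc matrix_mul_lid)
  finally show ?thesis .
qed

lemma GL_R_inverse:
  assumes "P \<in> GL_R"
  shows "P ** matrix_inv P = mat 1" "matrix_inv P ** P = mat 1"
  using assms matrix_inv_eqI unfolding GL_R_def by blast+

lemma GL_R_lift_mat:
  assumes M: "M > 0" and P: "P \<in> GL_R"
  shows "lift_mat M P \<in> GL_R" "matrix_inv (lift_mat M P) = lift_mat M (matrix_inv P)"
proof -
  obtain B where B: "\<forall>i j. in_R (B $ i $ j)" "P ** B = mat 1" "B ** P = mat 1"
    and P_R: "\<forall>i j. in_R (P $ i $ j)"
    using P unfolding GL_R_def by blast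
  have inv: "lift_mat M P ** lift_mat M B = mat 1" "lift_mat M B ** lift_mat M P = mat 1"
    using B M by (simp_all flip: lift_mat_mult add: lift_mat_mat_1)
  then show "lift_mat M P \<in> GL_R"
    unfolding GL_R_def using B P_R in_R_lift[OF M]
    by (auto simp: lift_mat_def intro!: exI[of _ "lift_mat M B"])
  show "matrix_inv (lift_mat M P) = lift_mat M (matrix_inv P)"
    using inv B matrix_inv_eqI by metis
qed

lemma det_GL_R_factorisation_nonzero:
  assumes "P \<in> GL_R" "Q \<in> GL_R" "\<forall>i. z $ i \<noteq> 0"
  shows "det (P ** diagm z ** matrix_inv Q) \<noteq> 0"
proof -
  have unit: "det A \<noteq> 0" if "A ** B = mat 1" for A B :: "complex fls^'n^'n"
    using that by (metis det_I det_mul mult_zero_left zero_neq_one)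
  have "det (diagm z) \<noteq> 0"
    using assms(3) by (subst det_diagonal) (auto simp: diagm_def)
  then show ?thesis
    using unit[OF GL_R_inverse(1)[OF assms(1)]] unit[OF GL_R_inverse(2)[OF assms(2)]]
    by (simp add: det_mul)
qed

definition perm_matrix :: "('n \<Rightarrow> 'n) \<Rightarrow> 'a::semiring_1^'n^'n" where
  "perm_matrix \<sigma> = (\<chi> i j. if i = \<sigma> j then 1 else 0)"

lemma matrix_mult_perm_matrix_nth: "(A ** perm_matrix \<sigma>) $ i $ j = A $ i $ \<sigma> j"
  by (simp add: perm_matrix_def matrix_matrix_mult_def if_distrib[of "\<lambda>x. _ * x"] cong: if_cong)

lemma transpose_perm_matrix_mult_nth: "(transpose (perm_matrix \<sigma>) ** A) $ i $ j = A $ \<sigma> i $ j"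
  by (simp add: perm_matrix_def transpose_def matrix_matrix_mult_def
      if_distrib[of "\<lambda>x. x * _"] cong: if_cong)

lemma matrix_mul_cancel_left:
  fixes A B C :: "'a::semiring_1^'n^'n"
  shows "A ** B = mat 1 \<Longrightarrow> A ** (B ** C) = C"
  by (metis matrix_mul_assoc matrix_mul_lid)

lemma perm_matrix_orthogonal:
  assumes "bij \<sigma>"
  shows "transpose (perm_matrix \<sigma>) ** perm_matrix \<sigma> = (mat 1 :: 'a::semiring_1^'n^'n)"
    and "perm_matrix \<sigma> ** transpose (perm_matrix \<sigma>) = (mat 1 :: 'a::semiring_1^'n^'n)"
proof -
  show "transpose (perm_matrix \<sigma>) ** perm_matrix \<sigma> = (mat 1 :: 'a^'n^'n)"
    unfolding vec_eq_iff transpose_perm_matrix_mult_nth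
    using assms by (simp add: perm_matrix_def mat_def bij_def inj_eq)
  have "(i = \<sigma> k) = (k = inv \<sigma> i)" for i k
    using assms by (metis bij_inv_eq_iff)
  then show "perm_matrix \<sigma> ** transpose (perm_matrix \<sigma>) = (mat 1 :: 'a^'n^'n)"
    by (simp add: vec_eq_iff perm_matrix_def transpose_def mat_def matrix_matrix_mult_def
        if_distrib[of "\<lambda>x. x * _"] cong: if_cong) (metis assms bij_inv_eq_iff)
qed

lemma diagm_permute:
  "bij \<sigma> \<Longrightarrow> diagm (\<chi> i. z $ \<sigma> i) = transpose (perm_matrix \<sigma>) ** diagm z ** perm_matrix \<sigma>"
  by (simp add: vec_eq_iff matrix_mult_perm_matrix_nth transpose_perm_matrix_mult_nth diagm_def
      bij_def inj_eq)

lemma GL_R_mult_perm_matrix: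
  assumes P: "P \<in> GL_R" and \<sigma>: "bij \<sigma>"
  shows "P ** perm_matrix \<sigma> \<in> GL_R"
proof -
  obtain B where B: "\<forall>i j. in_R (B $ i $ j)" "P ** B = mat 1" "B ** P = mat 1"
    and P_R: "\<forall>i j. in_R (P $ i $ j)"
    using P unfolding GL_R_def by blast
  have "(P ** perm_matrix \<sigma>) ** (transpose (perm_matrix \<sigma>) ** B) = mat 1"
    "(transpose (perm_matrix \<sigma>) ** B) ** (P ** perm_matrix \<sigma>) = mat 1"
    using B by (simp_all add: perm_matrix_orthogonal[OF \<sigma>] matrix_mul_cancel_left
        flip: matrix_mul_assoc)
  then show ?thesis
    unfolding GL_R_def using B P_R
    by (auto simp: matrix_mult_perm_matrix_nth transpose_perm_matrix_mult_nth
        intro!: exI[of _ "transpose (perm_matrix \<sigma>) ** B"])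
qed

lemma factorisation_permute:
  assumes Q: "Q \<in> GL_R" and \<sigma>: "bij \<sigma>"
  shows "(P ** perm_matrix \<sigma>) ** diagm (\<chi> i. z $ \<sigma> i) ** matrix_inv (Q ** perm_matrix \<sigma>)
         = P ** diagm z ** matrix_inv Q"
proof -
  have "matrix_inv (Q ** perm_matrix \<sigma>) = transpose (perm_matrix \<sigma>) ** matrix_inv Q"
    using GL_R_inverse[OF Q] by (intro matrix_inv_eqI)
      (simp_all add: perm_matrix_orthogonal[OF \<sigma>] matrix_mul_cancel_left flip: matrix_mul_assoc)
  then show ?thesis
    by (simp add: diagm_permute[OF \<sigma>] perm_matrix_orthogonal[OF \<sigma>] matrix_mul_cancel_left
        flip: matrix_mul_assoc)
qed

lemma mset_vec_image: "image_mset f (mset_vec z) = mset_vec (\<chi> i. f (z $ i))"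
  by (simp add: mset_vec_def multiset.map_comp o_def)

lemma mset_vec_eq_imp_permutes:
  assumes "mset_vec x = mset_vec y"
  obtains \<sigma> where "\<sigma> permutes UNIV" "\<forall>i. x $ i = y $ \<sigma> i"
proof -
  have "image_mset (\<lambda>i. x $ i) (mset_set UNIV) = image_mset (\<lambda>i. y $ i) (mset_set UNIV)"
    using assms by (simp add: mset_vec_def)
  from image_mset_eq_implies_permutes[OF finite_class.finite_UNIV this]
  obtain \<sigma> where "\<sigma> permutes UNIV" "\<forall>i\<in>UNIV. x $ i = y $ \<sigma> i" .
  then show thesis
    by (intro that) auto
qed

lemma sval_diagm_factorisation:
  assumes "M > 0" "P \<in> GL_R" "Q \<in> GL_R" "\<forall>i. z $ i \<noteq> 0"
  shows "is_sval (N * M) (lift_mat M P ** diagm z ** matrix_inv (lift_mat M Q))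
           (\<chi> i. val_lvl (N * M) (z $ i))"
  unfolding is_sval_def
  apply (rule exI[of _ 1], rule exI[of _ "lift_mat M P"], rule exI[of _ "lift_mat M Q"], rule exI[of _ z])
  using assms by (simp add: GL_R_lift_mat(1) lift_mat_by_1 mset_vec_image del: One_nat_def)

lemma trop_PQ_subset_strop:
  assumes N: "N > 0" and P: "P \<in> GL_R" and Q: "Q \<in> GL_R"
  shows "trop_PQ I N P Q \<subseteq> strop I"
  unfolding trop_PQ_def strop_def
proof (intro closure_mono subsetI)
  fix x
  assume "x \<in> {x. \<exists>M z. M > 0 \<and> (\<forall>i. z $ i \<noteq> 0) \<and>
      (\<forall>f\<in>I. regext f (lift_mat M P ** diagm z ** matrix_inv (lift_mat M Q)) = 0) \<and>
      (\<forall>i. x $ i = val_lvl (N * M) (z $ i))}"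
  then obtain M z where M: "M > 0" and z: "\<forall>i. z $ i \<noteq> 0"
    and vanish: "\<forall>f\<in>I. regext f (lift_mat M P ** diagm z ** matrix_inv (lift_mat M Q)) = 0"
    and x: "x = (\<chi> i. val_lvl (N * M) (z $ i))"
    by (auto simp: vec_eq_iff)
  have "det (lift_mat M P ** diagm z ** matrix_inv (lift_mat M Q)) \<noteq> 0"
    using det_GL_R_factorisation_nonzero GL_R_lift_mat(1) M P Q z by blast
  moreover have "\<forall>i. x $ i \<in> \<rat>"
    by (simp add: x val_lvl_def)
  moreover have "N * M > 0"
    using N M by simp
  ultimately show "x \<in> {x. (\<forall>i. x $ i \<in> \<rat>) \<and>
      (\<exists>N A. N > 0 \<and> det A \<noteq> 0 \<and> (\<forall>f\<in>I. regext f A = 0) \<and> is_sval N A x)}"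
    using sval_diagm_factorisation[OF M P Q z, of N] vanish unfolding x by blast
qed

lemma sval_in_trop_PQ:
  assumes N: "N > 0" and vanish: "\<forall>f\<in>I. regext f A = 0" and sval: "is_sval N A x"
  obtains N' P Q where "N' > 0" "P \<in> GL_R" "Q \<in> GL_R" "x \<in> trop_PQ I N' P Q"
proof -
  obtain M P Q z where M: "M > 0" and P: "P \<in> GL_R" and Q: "Q \<in> GL_R"
    and z: "\<forall>i. z $ i \<noteq> 0" and A: "lift_mat M A = P ** diagm z ** matrix_inv Q"
    and x: "mset_vec x = mset_vec (\<chi> i. val_lvl (N * M) (z $ i))"
    using sval unfolding is_sval_def mset_vec_image by blast
  obtain \<sigma> where "\<sigma> permutes UNIV" and x_\<sigma>: "\<forall>i. x $ i = val_lvl (N * M) (z $ \<sigma> i)"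
    using mset_vec_eq_imp_permutes[OF x] by auto
  then have \<sigma>: "bij \<sigma>"
    using permutes_bij by blast
  define z' where "z' = (\<chi> i. z $ \<sigma> i)"
  have factor: "lift_mat 1 (P ** perm_matrix \<sigma>) ** diagm z' **
      matrix_inv (lift_mat 1 (Q ** perm_matrix \<sigma>)) = lift_mat M A"
    unfolding lift_mat_by_1 z'_def A using factorisation_permute[OF Q \<sigma>] .
  have "\<forall>f\<in>I. regext f (lift_mat 1 (P ** perm_matrix \<sigma>) ** diagm z' **
      matrix_inv (lift_mat 1 (Q ** perm_matrix \<sigma>))) = 0"
    unfolding factor using vanish
    by (simp add: regext_lift_mat[OF M] lift_conv_fls_compose_power[OF M])
  then have "x \<in> trop_PQ I (N * M) (P ** perm_matrix \<sigma>) (Q ** perm_matrix \<sigma>)"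
    unfolding trop_PQ_def using z x_\<sigma>
    by (intro closure_subset[THEN subsetD] CollectI exI[where x = 1] exI[where x = z'])
      (simp add: z'_def)
  moreover have "N * M > 0"
    using N M by simp
  ultimately show ?thesis
    using that GL_R_mult_perm_matrix[OF P \<sigma>] GL_R_mult_perm_matrix[OF Q \<sigma>] by blast
qed

theorem mainTheorem17:
  fixes I :: "(complex^'n^'n \<Rightarrow> complex) set"
  assumes "proper_ideal I"
  shows "strop I = closure (\<Union>N\<in>{N. N > 0}. \<Union>P\<in>GL_R. \<Union>Q\<in>GL_R. trop_PQ I N P Q)"
    (is "_ = closure ?U")
proof
  show "strop I \<subseteq> closure ?U"
    unfolding strop_def
  proof (intro closure_mono subsetI)
    fix x
    assume "x \<in> {x. (\<forall>i. x $ i \<in> \<rat>) \<and>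
      (\<exists>N A. N > 0 \<and> det A \<noteq> 0 \<and> (\<forall>f\<in>I. regext f A = 0) \<and> is_sval N A x)}"
    then obtain N A where "N > 0" "\<forall>f\<in>I. regext f A = 0" "is_sval N A x"
      by blast
    then show "x \<in> ?U"
      by (rule sval_in_trop_PQ) blast
  qed
  show "closure ?U \<subseteq> strop I"
  proof (rule closure_minimal)
    show "?U \<subseteq> strop I"
      using trop_PQ_subset_strop by blast
    show "closed (strop I)"
      by (simp add: strop_def)
  qed
qed

end
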